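(* Let $n\ge1$, $b_i,B_i,d_i\ge0$ ($1\le i\le n$), $\theta_{i,j}\ge0$ ($i\ne j$), such that the directed graph on $\{1,\dots,n\}$ with edge set $\{(i,j):i\ne j,\ \theta_{i,j}>0\}$ is strongly connected, all eigenvalues of the matrix $A$ (defined in the context) have negative real parts, and $B=(B_1,\dots,B_n)\neq0$. Then there exist $v\in\mathbb{R}^n$ with positive coordinates, $c>0$ and $R\ge0$ such that $$v\cdot(Ax+B)<-c\,(v\cdot x+1)$$ for every $x\in\mathbb{R}_+^n$ with $\|x\|_1\ge R$.
   Context: $A\in\mathcal{M}_n(\mathbb{R})$ has entries $A_{i,i}=b_i-d_i-\sum_{j\ne i}\theta_{i,j}$ and $A_{i,j}=\theta_{j,i}$ for $i\ne j$; $\cdot$ is the usual scalar product. *)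

theory Defs
  imports "Jordan_Normal_Form.Char_Poly"
begin

text \<open>Vertices are indexed by 0..<n (paper: 1..n).  The matrix A of the paper:
  A(i,i) = b i - d i - sum over j ~= i of theta i j,  A(i,j) = theta j i for i ~= j.\<close>
definition matA :: "nat \<Rightarrow> (nat \<Rightarrow> real) \<Rightarrow> (nat \<Rightarrow> real) \<Rightarrow> (nat \<Rightarrow> nat \<Rightarrow> real) \<Rightarrow> real mat" where
  "matA n b d \<theta> = mat n n (\<lambda>(i,j). if i = j then b i - d i - (\<Sum>k\<in>{0..<n} - {i}. \<theta> i k) else \<theta> j i)"

definition edges :: "nat \<Rightarrow> (nat \<Rightarrow> nat \<Rightarrow> real) \<Rightarrow> (nat \<times> nat) set" where
  "edges n \<theta> = {(i,j). i < n \<and> j < n \<and> i \<noteq> j \<and> \<theta> i j > 0}"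

definition strongly_connected :: "nat \<Rightarrow> (nat \<times> nat) set \<Rightarrow> bool" where
  "strongly_connected n E \<longleftrightarrow> (\<forall>i<n. \<forall>j<n. (i,j) \<in> E\<^sup>*)"

end

theory Submission
  imports Defs "Jordan_Normal_Form.Spectral_Radius"
begin

text \<open>
  The matrix \<open>A\<close> is Metzler (nonnegative off the diagonal) and Hurwitz.  For large \<open>s\<close> the
  matrix \<open>P = I + A/s\<close> is entrywise nonnegative and, since \<open>|1 + \<mu>/s| < 1\<close> for every eigenvalue
  \<open>\<mu>\<close> of \<open>A\<close>, has spectral radius below 1; hence \<open>P\<^sup>k \<rightarrow> 0\<close> geometrically.  If the column sums
  of \<open>P\<^sup>K\<close> are at most 1/2, the weight \<open>v\<^sup>T = 1\<^sup>T (I + P + \<dots> + P\<^sup>K\<^sup>-\<^sup>1)\<close> satisfies \<open>v \<ge> 1\<close> and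
  \<open>v\<^sup>T P - v\<^sup>T = 1\<^sup>T P\<^sup>K - 1\<^sup>T \<le> -1/2\<close>, i.e. \<open>v\<^sup>T A \<le> -s/2\<close> componentwise.  For \<open>x \<ge> 0\<close> this gives
  \<open>v \<bullet> (A x + B) \<le> -(s/2) \<parallel>x\<parallel>\<^sub>1 + v \<bullet> B\<close>, which beats \<open>-c (v \<bullet> x + 1)\<close> once \<open>\<parallel>x\<parallel>\<^sub>1\<close> is large.
\<close>

lemma smult_mat_mult_vec:
  fixes A :: "'a :: comm_ring_1 mat"
  assumes "A \<in> carrier_mat nr nc" "v \<in> carrier_vec nc"
  shows "(k \<cdot>\<^sub>m A) *\<^sub>v v = k \<cdot>\<^sub>v (A *\<^sub>v v)"
  using assms by (intro eq_vecI) (auto simp: scalar_prod_def sum_distrib_left mult.assoc)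

lemma eigenvalue_affine_imp_eigenvalue:
  fixes M :: "'a :: field mat"
  assumes M: "M \<in> carrier_mat n n" and \<beta>: "\<beta> \<noteq> 0"
    and ev: "eigenvalue (\<alpha> \<cdot>\<^sub>m 1\<^sub>m n + \<beta> \<cdot>\<^sub>m M) l"
  shows "eigenvalue M ((l - \<alpha>) / \<beta>)"
proof -
  from ev obtain v where v: "v \<in> carrier_vec n" "v \<noteq> 0\<^sub>v n"
    and eq: "(\<alpha> \<cdot>\<^sub>m 1\<^sub>m n + \<beta> \<cdot>\<^sub>m M) *\<^sub>v v = l \<cdot>\<^sub>v v"
    unfolding eigenvalue_def eigenvector_def using M by auto
  have "(\<alpha> \<cdot>\<^sub>m 1\<^sub>m n + \<beta> \<cdot>\<^sub>m M) *\<^sub>v v = \<alpha> \<cdot>\<^sub>v v + \<beta> \<cdot>\<^sub>v (M *\<^sub>v v)"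
    using M v by (simp add: add_mult_distrib_mat_vec[of _ n n] smult_mat_mult_vec[of _ n n])
  with eq have comb: "\<alpha> \<cdot>\<^sub>v v + \<beta> \<cdot>\<^sub>v (M *\<^sub>v v) = l \<cdot>\<^sub>v v" by simp
  have "M *\<^sub>v v = ((l - \<alpha>) / \<beta>) \<cdot>\<^sub>v v"
  proof (rule eq_vecI)
    fix i assume "i < dim_vec (((l - \<alpha>) / \<beta>) \<cdot>\<^sub>v v)"
    then have i: "i < n" using v by auto
    from arg_cong[OF comb, of "\<lambda>w. w $ i"] i M v
    have "\<alpha> * v $ i + \<beta> * (M *\<^sub>v v) $ i = l * v $ i" by simp
    then show "(M *\<^sub>v v) $ i = (((l - \<alpha>) / \<beta>) \<cdot>\<^sub>v v) $ i"
      using i v \<beta> by (simp add: field_simps)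
  qed (use M v in auto)
  then show ?thesis unfolding eigenvalue_def eigenvector_def using M v by auto
qed

lemma pow_mat_smult:
  fixes P :: "'a :: comm_ring_1 mat"
  assumes P: "P \<in> carrier_mat n n"
  shows "(a \<cdot>\<^sub>m P) ^\<^sub>m k = a ^ k \<cdot>\<^sub>m P ^\<^sub>m k"
proof (induction k)
  case 0
  then show ?case using P by auto
next
  case (Suc k)
  have "(a \<cdot>\<^sub>m P) ^\<^sub>m Suc k = (a ^ k \<cdot>\<^sub>m P ^\<^sub>m k) * (a \<cdot>\<^sub>m P)"
    using Suc by simp
  also have "\<dots> = a ^ k \<cdot>\<^sub>m (P ^\<^sub>m k * (a \<cdot>\<^sub>m P))"
    using P by (simp add: mult_smult_assoc_mat[of _ n n _ n])
  also have "\<dots> = a ^ k \<cdot>\<^sub>m (a \<cdot>\<^sub>m (P ^\<^sub>m k * P))"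
    using P by (simp add: mult_smult_distrib[of _ n n _ n])
  also have "\<dots> = a ^ Suc k \<cdot>\<^sub>m P ^\<^sub>m Suc k"
    using P by (auto simp: mult.assoc)
  finally show ?case .
qed

lemma pow_mat_nonneg:
  fixes P :: "'a :: linordered_semidom mat"
  assumes P: "P \<in> carrier_mat n n" and nonneg: "\<forall>i<n. \<forall>j<n. P $$ (i,j) \<ge> 0"
  shows "i < n \<Longrightarrow> j < n \<Longrightarrow> (P ^\<^sub>m k) $$ (i,j) \<ge> 0"
proof (induction k arbitrary: i j)
  case 0
  then show ?case using P by auto
next
  case (Suc k)
  have "(P ^\<^sub>m Suc k) $$ (i,j) = (\<Sum>l = 0..<n. (P ^\<^sub>m k) $$ (i,l) * P $$ (l,j))"
    using P Suc.prems by (simp add: scalar_prod_def)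
  also have "\<dots> \<ge> 0"
    using Suc nonneg by (intro sum_nonneg mult_nonneg_nonneg) auto
  finally show ?case .
qed

lemma index_transpose_mult_vec:
  assumes "A \<in> carrier_mat nr nc" "dim_vec v = nr" "j < nc"
  shows "(transpose_mat A *\<^sub>v v) $ j = (\<Sum>l<nr. A $$ (l,j) * v $ l)"
  using assms by (simp add: scalar_prod_def atLeast0LessThan mult.commute)

lemma pow_mat_geometric_decay:
  fixes M :: "complex mat"
  assumes M: "M \<in> carrier_mat n n" and n: "n > 0" and radius: "spectral_radius M < 1"
  shows "\<exists>c r. 0 < r \<and> r < 1 \<and>
    (\<forall>k i j. i < n \<longrightarrow> j < n \<longrightarrow> cmod ((M ^\<^sub>m k) $$ (i,j)) \<le> c * r ^ k)"
proof -
  define \<rho> where "\<rho> = spectral_radius M"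
  have "0 \<le> \<rho>" using spectral_radius_mem_max(1)[OF M n] unfolding \<rho>_def by auto
  define r where "r = (1 + \<rho>) / 2"
  have r: "0 < r" "r < 1" "\<rho> < r" using \<open>0 \<le> \<rho>\<close> radius unfolding r_def \<rho>_def by auto
  \<comment> \<open>\<open>M / r\<close> still has spectral radius below 1, so its powers are bounded, and
    \<open>M\<^sup>k = r\<^sup>k (M / r)\<^sup>k\<close>.\<close>
  define Q where "Q = complex_of_real (1 / r) \<cdot>\<^sub>m M"
  have Q: "Q \<in> carrier_mat n n" using M unfolding Q_def by simp
  have "cmod l < 1" if "eigenvalue Q l" for l
  proof -
    have "Q = 0 \<cdot>\<^sub>m 1\<^sub>m n + complex_of_real (1 / r) \<cdot>\<^sub>m M"
      unfolding Q_def using M by auto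
    then have "eigenvalue M (l * r)"
      using eigenvalue_affine_imp_eigenvalue[OF M, of "complex_of_real (1 / r)" 0 l] that r
      by simp
    then have "cmod (l * r) \<le> \<rho>"
      using spectral_radius_mem_max(2)[OF M n] unfolding \<rho>_def spectrum_def by auto
    then show ?thesis using r by (smt (verit) mult_le_cancel_right1 norm_mult norm_of_real)
  qed
  then have "spectral_radius Q < 1"
    using spectral_radius_mem_max(1)[OF Q n] unfolding spectrum_def by auto
  then obtain c where c: "\<And>k. norm_bound (Q ^\<^sub>m k) c"
    using spectral_radius_jnf_norm_bound_less_1_upper_triangular[OF Q] by auto
  have "cmod ((M ^\<^sub>m k) $$ (i,j)) \<le> c * r ^ k" if "i < n" "j < n" for k i j
  proof -
    have "(Q ^\<^sub>m k) $$ (i,j) = complex_of_real (1 / r) ^ k * (M ^\<^sub>m k) $$ (i,j)"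
      unfolding Q_def pow_mat_smult[OF M] using M that by simp
    then have "cmod ((Q ^\<^sub>m k) $$ (i,j)) = cmod ((M ^\<^sub>m k) $$ (i,j)) / r ^ k"
      using r by (simp add: norm_mult norm_power norm_divide power_one_over)
    moreover have "cmod ((Q ^\<^sub>m k) $$ (i,j)) \<le> c"
      using c[of k] that Q unfolding norm_bound_def by simp
    ultimately show ?thesis using r by (simp add: pos_divide_le_eq)
  qed
  then show ?thesis using r by blast
qed

lemma cmod_one_add_divide_less_1:
  assumes "Re \<mu> < 0" and "cmod \<mu> ^ 2 / - Re \<mu> < s"
  shows "cmod (1 + \<mu> / complex_of_real s) < 1"
proof -
  have s: "s > 0" using assms by (smt (verit) divide_nonneg_pos zero_le_power2)
  have "cmod \<mu> ^ 2 < s * - Re \<mu>"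
    using pos_divide_less_eq[of "- Re \<mu>" "cmod \<mu> ^ 2" s] assms by simp
  moreover have "s * Re \<mu> < 0" using assms(1) s by (simp add: mult_pos_neg)
  ultimately have "(Re \<mu>)\<^sup>2 + (Im \<mu>)\<^sup>2 + 2 * s * Re \<mu> < 0"
    by (simp add: cmod_power2)
  then have "(s + Re \<mu>)\<^sup>2 + (Im \<mu>)\<^sup>2 < s\<^sup>2" by (simp add: power2_sum algebra_simps)
  then have "cmod (complex_of_real s + \<mu>) ^ 2 < s ^ 2" by (simp add: cmod_power2)
  then have "cmod (complex_of_real s + \<mu>) < s" using s by (simp add: power_less_imp_less_base)
  moreover have "1 + \<mu> / complex_of_real s = (complex_of_real s + \<mu>) / complex_of_real s"
    using s by (simp add: field_simps)
  ultimately show ?thesis using s by (simp add: norm_divide)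
qed

lemma spectral_radius_one_add_divide_less_1:
  fixes A :: "real mat"
  assumes A: "A \<in> carrier_mat n n" and n: "n > 0" and s: "s > 0"
    and large: "\<forall>\<mu>. eigenvalue (map_mat complex_of_real A) \<mu> \<longrightarrow>
                  Re \<mu> < 0 \<and> cmod \<mu> ^ 2 / - Re \<mu> < s"
  shows "spectral_radius (map_mat complex_of_real (1\<^sub>m n + (1 / s) \<cdot>\<^sub>m A)) < 1"
proof -
  define Pc where "Pc = map_mat complex_of_real (1\<^sub>m n + (1 / s) \<cdot>\<^sub>m A)"
  have Pc: "Pc = 1 \<cdot>\<^sub>m 1\<^sub>m n + complex_of_real (1 / s) \<cdot>\<^sub>m map_mat complex_of_real A"
    unfolding Pc_def using A by auto
  have "cmod l < 1" if "eigenvalue Pc l" for l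
  proof -
    define \<mu> where "\<mu> = (l - 1) * complex_of_real s"
    have "eigenvalue (map_mat complex_of_real A) \<mu>"
      using eigenvalue_affine_imp_eigenvalue[of "map_mat complex_of_real A" n "complex_of_real (1 / s)" 1 l]
        A that Pc s
      unfolding \<mu>_def by simp
    then have "Re \<mu> < 0" and "cmod \<mu> ^ 2 / - Re \<mu> < s" using large by auto
    moreover have "l = 1 + \<mu> / complex_of_real s" unfolding \<mu>_def using s by simp
    ultimately show ?thesis using cmod_one_add_divide_less_1 by simp
  qed
  moreover have "spectral_radius Pc \<in> cmod ` spectrum Pc"
    by (rule spectral_radius_mem_max(1)[OF _ n]) (use A in \<open>simp add: Pc_def\<close>)
  ultimately show ?thesis unfolding Pc_def spectrum_def by auto
qed

lemma metzler_hurwitz_nonneg_contraction: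
  fixes A :: "real mat"
  assumes A: "A \<in> carrier_mat n n" and n: "n > 0"
    and metzler: "\<forall>i<n. \<forall>j<n. i \<noteq> j \<longrightarrow> A $$ (i,j) \<ge> 0"
    and hurwitz: "\<forall>\<mu>. eigenvalue (map_mat complex_of_real A) \<mu> \<longrightarrow> Re \<mu> < 0"
  shows "\<exists>s>0. (\<forall>i<n. \<forall>j<n. (1\<^sub>m n + (1 / s) \<cdot>\<^sub>m A) $$ (i,j) \<ge> 0) \<and>
           spectral_radius (map_mat complex_of_real (1\<^sub>m n + (1 / s) \<cdot>\<^sub>m A)) < 1"
proof -
  define Ac where "Ac = map_mat complex_of_real A"
  have Ac: "Ac \<in> carrier_mat n n" using A unfolding Ac_def by simp
  define bounds where
    "bounds = (\<lambda>\<mu>. cmod \<mu> ^ 2 / - Re \<mu>) ` spectrum Ac \<union> (\<lambda>i. \<bar>A $$ (i,i)\<bar>) ` {..<n}"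
  have "finite bounds"
    unfolding bounds_def using card_finite_spectrum[OF Ac] by simp
  define s where "s = 1 + Max (insert 0 bounds)"
  have Max_bounds: "x \<le> Max (insert 0 bounds)" if "x \<in> insert 0 bounds" for x
    using \<open>finite bounds\<close> that by (intro Max_ge) auto
  have below_s: "x < s" if "x \<in> bounds" for x
    using Max_bounds[of x] that unfolding s_def by simp
  have s: "s > 0"
    using Max_bounds[of 0] unfolding s_def by simp
  have "(1\<^sub>m n + (1 / s) \<cdot>\<^sub>m A) $$ (i,j) \<ge> 0" if "i < n" "j < n" for i j
  proof (cases "i = j")
    case True
    have "\<bar>A $$ (i,i)\<bar> < s" using below_s that unfolding bounds_def by blast
    then have "0 \<le> 1 + A $$ (i,i) / s" using s by (simp add: field_simps abs_less_iff)
    then show ?thesis using A that True by simp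
  next
    case False
    then show ?thesis using A that metzler s by simp
  qed
  moreover have "Re \<mu> < 0 \<and> cmod \<mu> ^ 2 / - Re \<mu> < s"
    if "eigenvalue (map_mat complex_of_real A) \<mu>" for \<mu>
    using that hurwitz below_s unfolding bounds_def spectrum_def Ac_def by blast
  ultimately show ?thesis
    using s spectral_radius_one_add_divide_less_1[OF A n s] by blast
qed

lemma pow_mat_entries_eventually_small:
  fixes P :: "real mat"
  assumes P: "P \<in> carrier_mat n n" and n: "n > 0"
    and radius: "spectral_radius (map_mat complex_of_real P) < 1" and \<epsilon>: "\<epsilon> > 0"
  shows "\<exists>K. \<forall>i<n. \<forall>j<n. \<bar>(P ^\<^sub>m K) $$ (i,j)\<bar> \<le> \<epsilon>"
proof -
  obtain c r where r: "0 < r" "r < 1"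
    and decay: "\<forall>k i j. i < n \<longrightarrow> j < n \<longrightarrow>
                  cmod ((map_mat complex_of_real P ^\<^sub>m k) $$ (i,j)) \<le> c * r ^ k"
    using pow_mat_geometric_decay[of "map_mat complex_of_real P" n] P n radius by auto
  have "(\<lambda>k. c * r ^ k) \<longlonglongrightarrow> 0"
    using r by (intro tendsto_mult_right_zero LIMSEQ_power_zero) simp
  then have "\<forall>\<^sub>F k in sequentially. c * r ^ k < \<epsilon>"
    using \<epsilon> by (intro order_tendstoD(2)) auto
  then obtain K where K: "c * r ^ K < \<epsilon>"
    by (auto simp: eventually_sequentially)
  have "\<bar>(P ^\<^sub>m K) $$ (i,j)\<bar> \<le> \<epsilon>" if "i < n" "j < n" for i j
  proof -
    have "map_mat complex_of_real P ^\<^sub>m K = map_mat complex_of_real (P ^\<^sub>m K)"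
      by (rule of_real_hom.mat_hom_pow[OF P, symmetric])
    then have "cmod ((map_mat complex_of_real P ^\<^sub>m K) $$ (i,j)) = \<bar>(P ^\<^sub>m K) $$ (i,j)\<bar>"
      using P that by simp
    moreover have "cmod ((map_mat complex_of_real P ^\<^sub>m K) $$ (i,j)) \<le> c * r ^ K"
      using decay that by blast
    ultimately show ?thesis using K by simp
  qed
  then show ?thesis by blast
qed

lemma nonneg_telescoping_weight:
  fixes P :: "real mat"
  assumes P: "P \<in> carrier_mat n n"
    and nonneg: "\<forall>i<n. \<forall>j<n. P $$ (i,j) \<ge> 0"
    and small: "\<forall>j<n. (\<Sum>i<n. (P ^\<^sub>m K) $$ (i,j)) \<le> 1 / 2"
  shows "\<exists>v. dim_vec v = n \<and> (\<forall>j<n. v $ j \<ge> 1) \<and>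
           (\<forall>j<n. (transpose_mat P *\<^sub>v v) $ j \<le> v $ j - 1 / 2)"
proof -
  define colsum where "colsum k j = (\<Sum>i<n. (P ^\<^sub>m k) $$ (i,j))" for k j
  have colsum_0: "colsum 0 j = 1" if "j < n" for j
    unfolding colsum_def using P that by simp
  have colsum_K: "colsum K j \<le> 1 / 2" if "j < n" for j
    using small that unfolding colsum_def by blast
  define v where "v = vec n (\<lambda>j. \<Sum>k<K. colsum k j)"
  have "v $ j \<ge> 1" if j: "j < n" for j
  proof -
    have "K \<noteq> 0" using colsum_K[OF j] colsum_0[OF j] by (cases K) auto
    then have "colsum 0 j \<le> (\<Sum>k<K. colsum k j)"
      using pow_mat_nonneg[OF P nonneg] j unfolding colsum_def
      by (intro member_le_sum sum_nonneg) auto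
    then show ?thesis unfolding v_def using colsum_0 j by simp
  qed
  moreover have "(transpose_mat P *\<^sub>v v) $ j \<le> v $ j - 1 / 2" if j: "j < n" for j
  proof -
    have "(transpose_mat P *\<^sub>v v) $ j = (\<Sum>l<n. P $$ (l,j) * v $ l)"
      by (rule index_transpose_mult_vec[OF P _ j]) (simp add: v_def)
    also have "\<dots> = (\<Sum>l<n. P $$ (l,j) * (\<Sum>k<K. \<Sum>i<n. (P ^\<^sub>m k) $$ (i,l)))"
      unfolding v_def colsum_def by simp
    also have "\<dots> = (\<Sum>l<n. \<Sum>k<K. \<Sum>i<n. (P ^\<^sub>m k) $$ (i,l) * P $$ (l,j))"
      by (simp add: sum_distrib_left sum_distrib_right mult.commute)
    also have "\<dots> = (\<Sum>k<K. \<Sum>l<n. \<Sum>i<n. (P ^\<^sub>m k) $$ (i,l) * P $$ (l,j))"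
      by (rule sum.swap)
    also have "\<dots> = (\<Sum>k<K. \<Sum>i<n. \<Sum>l<n. (P ^\<^sub>m k) $$ (i,l) * P $$ (l,j))"
      by (rule sum.cong[OF refl], rule sum.swap)
    also have "\<dots> = (\<Sum>k<K. colsum (Suc k) j)"
      using P j unfolding colsum_def by (simp add: scalar_prod_def atLeast0LessThan)
    also have "\<dots> = v $ j + colsum K j - colsum 0 j"
      using j sum_lessThan_telescope[of "\<lambda>k. colsum k j" K] unfolding v_def
      by (simp add: sum_subtractf)
    finally show ?thesis using colsum_K[OF j] colsum_0[OF j] by linarith
  qed
  moreover have "dim_vec v = n" unfolding v_def by simp
  ultimately show ?thesis by blast
qed

lemma metzler_hurwitz_dominant_weight:
  fixes A :: "real mat"
  assumes A: "A \<in> carrier_mat n n" and n: "n > 0"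
    and metzler: "\<forall>i<n. \<forall>j<n. i \<noteq> j \<longrightarrow> A $$ (i,j) \<ge> 0"
    and hurwitz: "\<forall>\<mu>. eigenvalue (map_mat complex_of_real A) \<mu> \<longrightarrow> Re \<mu> < 0"
  shows "\<exists>v \<delta>. \<delta> > 0 \<and> dim_vec v = n \<and> (\<forall>j<n. v $ j \<ge> 1) \<and>
           (\<forall>j<n. (transpose_mat A *\<^sub>v v) $ j \<le> - \<delta>)"
proof -
  obtain s where s: "s > 0"
    and nonneg: "\<forall>i<n. \<forall>j<n. (1\<^sub>m n + (1 / s) \<cdot>\<^sub>m A) $$ (i,j) \<ge> 0"
    and radius: "spectral_radius (map_mat complex_of_real (1\<^sub>m n + (1 / s) \<cdot>\<^sub>m A)) < 1"
    using metzler_hurwitz_nonneg_contraction[OF A n metzler hurwitz] by blast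
  define P where "P = 1\<^sub>m n + (1 / s) \<cdot>\<^sub>m A"
  have P: "P \<in> carrier_mat n n" unfolding P_def using A by simp
  obtain K where K: "\<forall>i<n. \<forall>j<n. \<bar>(P ^\<^sub>m K) $$ (i,j)\<bar> \<le> 1 / (2 * n)"
    using pow_mat_entries_eventually_small[OF P n, of "1 / (2 * n)"] radius n
    unfolding P_def by auto
  have "(\<Sum>i<n. (P ^\<^sub>m K) $$ (i,j)) \<le> 1 / 2" if "j < n" for j
  proof -
    have "(\<Sum>i<n. (P ^\<^sub>m K) $$ (i,j)) \<le> (\<Sum>i<n. 1 / (2 * real n))"
      using K that by (intro sum_mono) (auto dest: abs_le_D1)
    then show ?thesis using n by simp
  qed
  moreover have "\<forall>i<n. \<forall>j<n. P $$ (i,j) \<ge> 0" using nonneg unfolding P_def .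
  ultimately obtain v where v: "dim_vec v = n" "\<forall>j<n. v $ j \<ge> 1"
    and contract: "\<forall>j<n. (transpose_mat P *\<^sub>v v) $ j \<le> v $ j - 1 / 2"
    using nonneg_telescoping_weight[OF P] by blast
  have "(transpose_mat A *\<^sub>v v) $ j \<le> - (s / 2)" if j: "j < n" for j
  proof -
    have "(transpose_mat P *\<^sub>v v) $ j = (\<Sum>l<n. P $$ (l,j) * v $ l)"
      by (rule index_transpose_mult_vec[OF P v(1) j])
    also have "\<dots> = (\<Sum>l<n. (if l = j then v $ l else 0) + A $$ (l,j) * v $ l / s)"
      using A j by (intro sum.cong) (auto simp: P_def distrib_right)
    also have "\<dots> = v $ j + (\<Sum>l<n. A $$ (l,j) * v $ l) / s"
      using j by (simp add: sum.distrib sum_divide_distrib)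
    also have "(\<Sum>l<n. A $$ (l,j) * v $ l) = (transpose_mat A *\<^sub>v v) $ j"
      by (rule index_transpose_mult_vec[OF A v(1) j, symmetric])
    finally have "(transpose_mat P *\<^sub>v v) $ j = v $ j + (transpose_mat A *\<^sub>v v) $ j / s" .
    moreover have "(transpose_mat P *\<^sub>v v) $ j \<le> v $ j - 1 / 2" using contract j by blast
    ultimately have "(transpose_mat A *\<^sub>v v) $ j / s \<le> - 1 / 2" by linarith
    then show ?thesis using s by (simp add: divide_le_eq)
  qed
  then show ?thesis using v s by (intro exI[of _ v] exI[of _ "s / 2"]) auto
qed

lemma dominant_weight_drift:
  fixes A :: "real mat"
  assumes A: "A \<in> carrier_mat n n" and v: "dim_vec v = n" and w: "dim_vec w = n"
    and \<delta>: "\<delta> > 0" and dominant: "\<forall>j<n. (transpose_mat A *\<^sub>v v) $ j \<le> - \<delta>"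
  shows "\<exists>c>0. \<exists>R\<ge>0. \<forall>x.
           dim_vec x = n \<and> (\<forall>i<n. x $ i \<ge> 0) \<and> (\<Sum>i<n. \<bar>x $ i\<bar>) \<ge> R \<longrightarrow>
           v \<bullet> (A *\<^sub>v x + w) < - c * (v \<bullet> x + 1)"
proof -
  define V where "V = 1 + (\<Sum>i<n. \<bar>v $ i\<bar>)"
  have V: "V \<ge> 1" unfolding V_def by (simp add: sum_nonneg)
  have v_le_V: "v $ i \<le> V" if "i < n" for i
  proof -
    have "\<bar>v $ i\<bar> \<le> (\<Sum>i<n. \<bar>v $ i\<bar>)" by (rule member_le_sum) (use that in auto)
    then show ?thesis unfolding V_def by linarith
  qed
  define c where "c = \<delta> / (2 * V)"
  have c: "c > 0" unfolding c_def using \<delta> V by simp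
  define R where "R = 2 * (\<bar>v \<bullet> w\<bar> + c) / \<delta> + 1"
  have R: "R \<ge> 0" unfolding R_def using \<delta> c by simp
  have "v \<bullet> (A *\<^sub>v x + w) < - c * (v \<bullet> x + 1)"
    if x: "dim_vec x = n" "\<forall>i<n. x $ i \<ge> 0" and large: "(\<Sum>i<n. \<bar>x $ i\<bar>) \<ge> R" for x
  proof -
    define X where "X = (\<Sum>i<n. x $ i)"
    have "(\<Sum>i<n. \<bar>x $ i\<bar>) = X" unfolding X_def using x(2) by (intro sum.cong) auto
    with large have "X \<ge> R" by linarith
    have "v \<bullet> (A *\<^sub>v x) = (transpose_mat A *\<^sub>v v) \<bullet> x"
      by (rule transpose_vec_mult_scalar[OF A, symmetric]) (use x v in \<open>auto intro: carrier_vecI\<close>)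
    also have "\<dots> = (\<Sum>i<n. (transpose_mat A *\<^sub>v v) $ i * x $ i)"
      using x A by (simp add: scalar_prod_def atLeast0LessThan)
    also have "\<dots> \<le> (\<Sum>i<n. - \<delta> * x $ i)"
      using dominant x by (intro sum_mono mult_right_mono) auto
    also have "\<dots> = - (\<delta> * X)" unfolding X_def by (simp add: sum_distrib_left sum_negf)
    finally have drift: "v \<bullet> (A *\<^sub>v x) \<le> - (\<delta> * X)" .
    have "v \<bullet> x = (\<Sum>i<n. v $ i * x $ i)"
      using x by (simp add: scalar_prod_def atLeast0LessThan)
    also have "\<dots> \<le> (\<Sum>i<n. V * x $ i)"
      using x v_le_V by (intro sum_mono mult_right_mono) auto
    finally have "v \<bullet> x \<le> V * X" unfolding X_def by (simp add: sum_distrib_left)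
    then have "2 * (c * (v \<bullet> x)) \<le> 2 * (c * V) * X"
      using c by (simp add: mult.assoc)
    also have "2 * (c * V) = \<delta>" unfolding c_def using V by simp
    finally have "2 * (c * (v \<bullet> x)) \<le> \<delta> * X" .
    moreover have "\<delta> * X > 2 * \<bar>v \<bullet> w\<bar> + 2 * c"
    proof -
      have "\<delta> * X \<ge> \<delta> * R" using \<open>X \<ge> R\<close> \<delta> by simp
      moreover have "\<delta> * R = 2 * \<bar>v \<bullet> w\<bar> + 2 * c + \<delta>"
        unfolding R_def using \<delta> by (simp add: field_simps)
      ultimately show ?thesis using \<delta> by linarith
    qed
    moreover have "v \<bullet> (A *\<^sub>v x + w) = v \<bullet> (A *\<^sub>v x) + v \<bullet> w"
      by (rule scalar_prod_add_distrib[of v n]) (use A v w x in \<open>auto intro: carrier_vecI\<close>)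
    ultimately have "v \<bullet> (A *\<^sub>v x + w) < - (c * (v \<bullet> x)) - c"
      using drift abs_ge_self[of "v \<bullet> w"] by linarith
    then show ?thesis by (simp add: algebra_simps)
  qed
  then show ?thesis using c R by blast
qed

theorem lemma1:
  fixes n :: nat and b B d :: "nat \<Rightarrow> real" and \<theta> :: "nat \<Rightarrow> nat \<Rightarrow> real"
  assumes "n \<ge> 1"
    and "\<forall>i<n. b i \<ge> 0 \<and> B i \<ge> 0 \<and> d i \<ge> 0"
    and "\<forall>i<n. \<forall>j<n. i \<noteq> j \<longrightarrow> \<theta> i j \<ge> 0"
    and "strongly_connected n (edges n \<theta>)"
    and "\<forall>\<mu>. eigenvalue (map_mat complex_of_real (matA n b d \<theta>)) \<mu> \<longrightarrow> Re \<mu> < 0"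
    and "vec n B \<noteq> 0\<^sub>v n"
  shows "\<exists>v :: real vec. dim_vec v = n \<and> (\<forall>i<n. v $ i > 0) \<and>
           (\<exists>c > 0. \<exists>R \<ge> 0. \<forall>x :: real vec.
              dim_vec x = n \<and> (\<forall>i<n. x $ i \<ge> 0) \<and> (\<Sum>i<n. \<bar>x $ i\<bar>) \<ge> R \<longrightarrow>
              v \<bullet> (matA n b d \<theta> *\<^sub>v x + vec n B) < - c * (v \<bullet> x + 1))"
proof -
  let ?A = "matA n b d \<theta>"
  have A: "?A \<in> carrier_mat n n" unfolding matA_def by simp
  have metzler: "\<forall>i<n. \<forall>j<n. i \<noteq> j \<longrightarrow> ?A $$ (i,j) \<ge> 0"
    using assms(3) unfolding matA_def by simp
  obtain v \<delta> where \<delta>: "\<delta> > 0" and v: "dim_vec v = n" "\<forall>j<n. v $ j \<ge> 1"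
    and dominant: "\<forall>j<n. (transpose_mat ?A *\<^sub>v v) $ j \<le> - \<delta>"
    using metzler_hurwitz_dominant_weight[OF A _ metzler assms(5)] assms(1) by auto
  have "\<forall>i<n. v $ i > 0" using v(2) by (auto intro: less_le_trans[OF zero_less_one])
  moreover have "\<exists>c>0. \<exists>R\<ge>0. \<forall>x.
      dim_vec x = n \<and> (\<forall>i<n. x $ i \<ge> 0) \<and> (\<Sum>i<n. \<bar>x $ i\<bar>) \<ge> R \<longrightarrow>
      v \<bullet> (?A *\<^sub>v x + vec n B) < - c * (v \<bullet> x + 1)"
    by (rule dominant_weight_drift[OF A v(1) _ \<delta> dominant]) simp
  ultimately show ?thesis using v(1) by blast
qed

end
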